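(* Let $\lambda>0$. In a deterministic interest-rate model (as described in the context), if the long tail-Pareto rate $L^{(\lambda)}_{0\infty}$ of index $\lambda$ is finite, then for all $t\ge0$ the long tail-Pareto rate $L^{(\lambda)}_{t\infty}$ is finite and is given by $L^{(\lambda)}_{t\infty}=P_{0t}^{1/\lambda}L^{(\lambda)}_{0\infty}$.
   Context: A deterministic interest-rate model is given by a deterministic initial discount function $T\mapsto P_{0T}>0$ ($T\ge0$, $P_{00}=1$), with discount bond prices at later times determined by absence of arbitrage as $P_{tT}=P_{0T}/P_{0t}$ for $0\le t<T$. For $\lambda>0$, the tail-Pareto rate $L^{(\lambda)}_{tT}$ is defined by $P_{tT}=\left[1+\lambda^{-1}(T-t)L^{(\lambda)}_{tT}\right]^{-\lambda}$, and the long tail-Pareto rate is $L^{(\lambda)}_{t\infty}=\limsup_{T\to\infty}L^{(\lambda)}_{tT}$. *)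

theory Defs
  imports "HOL-Analysis.Analysis"
begin

definition bond_price :: "(real \<Rightarrow> real) \<Rightarrow> real \<Rightarrow> real \<Rightarrow> real" where
  "bond_price P0 t T = P0 T / P0 t"

text \<open>Tail-Pareto rate: the unique L with P_{tT} = (1 + (T-t) L / lam) powr (-lam),
  i.e. L = lam * (P_{tT} powr (-1/lam) - 1) / (T - t), for t < T.\<close>
definition tail_pareto_rate :: "real \<Rightarrow> (real \<Rightarrow> real) \<Rightarrow> real \<Rightarrow> real \<Rightarrow> real" where
  "tail_pareto_rate lam P0 t T = lam * (bond_price P0 t T powr (-1/lam) - 1) / (T - t)"

definition long_tail_pareto_rate :: "real \<Rightarrow> (real \<Rightarrow> real) \<Rightarrow> real \<Rightarrow> ereal" where
  "long_tail_pareto_rate lam P0 t = Limsup at_top (\<lambda>T. ereal (tail_pareto_rate lam P0 t T))"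

end

theory Submission
  imports Defs "HOL-Real_Asymp.Real_Asymp"
begin

text \<open>With \<open>a = P\<^sub>0\<^sub>t powr (1/\<lambda>)\<close>, the rate seen from time \<open>t\<close> is exactly
  \<open>L\<^sub>t\<^sub>T = (T a L\<^sub>0\<^sub>T + \<lambda> (a - 1)) / (T - t)\<close>, hence
  \<open>L\<^sub>t\<^sub>T - a L\<^sub>0\<^sub>T = (t a L\<^sub>0\<^sub>T + \<lambda> (a - 1)) / (T - t)\<close>. This tends to \<open>0\<close> because \<open>L\<^sub>0\<^sub>T\<close> is
  eventually bounded: from above since its limsup is finite, from below by \<open>-\<lambda>/T\<close> since bond
  prices are positive. A vanishing perturbation does not change a limsup, and the limsup
  commutes with multiplication by \<open>a > 0\<close>.\<close>

lemma Limsup_le_if_tendsto_diff_zero: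
  fixes f g :: "'a \<Rightarrow> real"
  assumes "F \<noteq> bot" and "((\<lambda>x. g x - f x) \<longlongrightarrow> 0) F"
  shows "Limsup F (\<lambda>x. ereal (g x)) \<le> Limsup F (\<lambda>x. ereal (f x))"
proof (rule ereal_le_epsilon2)
  fix e :: real assume "0 < e"
  with assms(2) have "eventually (\<lambda>x. \<bar>g x - f x\<bar> < e) F"
    by (auto simp: tendsto_iff dist_real_def)
  then have "Limsup F (\<lambda>x. ereal (g x)) \<le> Limsup F (\<lambda>x. ereal (f x) + ereal e)"
    by (intro Limsup_mono) (auto elim!: eventually_mono)
  also have "\<dots> = Limsup F (\<lambda>x. ereal (f x)) + ereal e"
    using assms(1) by (intro Limsup_add_ereal_right) auto
  finally show "Limsup F (\<lambda>x. ereal (g x)) \<le> Limsup F (\<lambda>x. ereal (f x)) + ereal e" .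
qed

lemma Limsup_eq_if_tendsto_diff_zero:
  fixes f g :: "'a \<Rightarrow> real"
  assumes "F \<noteq> bot" and "((\<lambda>x. g x - f x) \<longlongrightarrow> 0) F"
  shows "Limsup F (\<lambda>x. ereal (g x)) = Limsup F (\<lambda>x. ereal (f x))"
proof -
  have "((\<lambda>x. f x - g x) \<longlongrightarrow> 0) F"
    using tendsto_minus[OF assms(2)] by simp
  then show ?thesis
    using assms by (intro antisym Limsup_le_if_tendsto_diff_zero)
qed

lemma Bfun_if_Limsup_finite_and_eventually_ge:
  fixes f :: "'a \<Rightarrow> real"
  assumes "Limsup F (\<lambda>x. ereal (f x)) \<noteq> \<infinity>" and "eventually (\<lambda>x. b \<le> f x) F"
  shows "Bfun f F"
proof -
  obtain n :: nat where "Limsup F (\<lambda>x. ereal (f x)) < ereal (real n)"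
    using assms(1) less_PInf_Ex_of_nat by blast
  then have "eventually (\<lambda>x. f x < real n) F"
    using Limsup_lessD by fastforce
  with assms(2) have "eventually (\<lambda>x. norm (f x) \<le> \<bar>b\<bar> + real n) F"
    by eventually_elim auto
  then show ?thesis
    by (intro BfunI) auto
qed

lemma tail_pareto_rate_ge:
  assumes "lam > 0" and "t < T"
  shows "- lam / (T - t) \<le> tail_pareto_rate lam P0 t T"
proof -
  have "- lam \<le> lam * (bond_price P0 t T powr (-1/lam) - 1)"
    using assms(1) by (simp add: right_diff_distrib)
  from divide_right_mono[OF this, of "T - t"] show ?thesis
    using assms(2) by (simp add: tail_pareto_rate_def)
qed

lemma Bfun_tail_pareto_rate_from_zero:
  assumes "lam > 0" and "\<bar>long_tail_pareto_rate lam P0 0\<bar> \<noteq> \<infinity>"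
  shows "Bfun (tail_pareto_rate lam P0 0) at_top"
proof (rule Bfun_if_Limsup_finite_and_eventually_ge)
  show "Limsup at_top (\<lambda>T. ereal (tail_pareto_rate lam P0 0 T)) \<noteq> \<infinity>"
    using assms(2) by (auto simp: long_tail_pareto_rate_def)
  show "eventually (\<lambda>T. - lam \<le> tail_pareto_rate lam P0 0 T) at_top"
    using eventually_ge_at_top[of 1]
  proof eventually_elim
    case (elim T)
    then have "- lam \<le> - lam / T"
      using assms(1) by (simp add: field_simps)
    then show ?case
      using tail_pareto_rate_ge[OF assms(1), of 0 T P0] elim by simp
  qed
qed

lemma tail_pareto_rate_rebase:
  assumes "P0 0 = 1" and "P0 t > 0" and "P0 T > 0" and "0 < T" and "t < T"
  shows "tail_pareto_rate lam P0 t T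
           = (T * P0 t powr (1/lam) * tail_pareto_rate lam P0 0 T + lam * (P0 t powr (1/lam) - 1))
             / (T - t)"
proof -
  define a x L0 where "a = P0 t powr (1/lam)" and "x = P0 T powr (-1/lam)"
    and "L0 = tail_pareto_rate lam P0 0 T"
  have "bond_price P0 t T powr (-1/lam) = x * a"
    using assms(2,3) by (simp add: bond_price_def a_def x_def powr_divide powr_minus_divide)
  then have rate_t: "tail_pareto_rate lam P0 t T = lam * (x * a - 1) / (T - t)"
    by (simp add: tail_pareto_rate_def)
  have "T * L0 = lam * (x - 1)"
    using assms(1,4) by (simp add: L0_def tail_pareto_rate_def bond_price_def x_def)
  then have "T * a * L0 = a * (lam * (x - 1))"
    by (metis mult.assoc mult.commute)
  then have "T * a * L0 + lam * (a - 1) = lam * (x * a - 1)"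
    by (simp add: algebra_simps)
  with rate_t show ?thesis
    unfolding a_def[symmetric] L0_def[symmetric] by simp
qed

lemma tendsto_tail_pareto_rate_rebase_diff:
  assumes P0_pos: "\<And>T. T \<ge> 0 \<Longrightarrow> P0 T > 0" and "P0 0 = 1" and "t \<ge> 0"
    and bounded: "Bfun (tail_pareto_rate lam P0 0) at_top"
  shows "((\<lambda>T. tail_pareto_rate lam P0 t T - P0 t powr (1/lam) * tail_pareto_rate lam P0 0 T)
           \<longlongrightarrow> 0) at_top"
proof -
  define a where "a = P0 t powr (1/lam)"
  have diff_eq: "eventually (\<lambda>T. tail_pareto_rate lam P0 t T - a * tail_pareto_rate lam P0 0 T
          = (a * t) * (tail_pareto_rate lam P0 0 T * (1 / (T - t))) + lam * (a - 1) / (T - t)) at_top"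
    using eventually_gt_at_top[of t]
  proof eventually_elim
    case (elim T)
    have "tail_pareto_rate lam P0 t T
        = (T * a * tail_pareto_rate lam P0 0 T + lam * (a - 1)) / (T - t)"
      unfolding a_def using elim assms(3) by (intro tail_pareto_rate_rebase assms(2) P0_pos) auto
    moreover have "T - t \<noteq> 0"
      using elim by simp
    ultimately show ?case
      by (simp add: divide_simps) (simp add: algebra_simps)
  qed
  have rate_decay: "((\<lambda>T. tail_pareto_rate lam P0 0 T * (1 / (T - t))) \<longlongrightarrow> 0) at_top"
  proof -
    have "((\<lambda>T. 1 / (T - t)) \<longlongrightarrow> 0) at_top" by real_asymp
    then have "Zfun (\<lambda>T. 1 / (T - t)) at_top"
      by (simp add: tendsto_Zfun_iff)
    with bounded have "Zfun (\<lambda>T. tail_pareto_rate lam P0 0 T * (1 / (T - t))) at_top"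
      by (rule bounded_bilinear.Bfun_prod_Zfun[OF bounded_bilinear_mult])
    then show ?thesis
      by (simp add: tendsto_Zfun_iff)
  qed
  have "((\<lambda>T. lam * (a - 1) / (T - t)) \<longlongrightarrow> 0) at_top" by real_asymp
  with rate_decay have "((\<lambda>T. (a * t) * (tail_pareto_rate lam P0 0 T * (1 / (T - t)))
      + lam * (a - 1) / (T - t)) \<longlongrightarrow> 0) at_top"
    by (intro tendsto_add_zero tendsto_mult_right_zero)
  then show ?thesis
    unfolding a_def[symmetric]
    by (rule Lim_transform_eventually) (use diff_eq in \<open>auto elim: eventually_mono\<close>)
qed

theorem proposition8:
  fixes P0 :: "real \<Rightarrow> real" and lam :: real
  assumes lam_pos: "lam > 0"
    and P0_pos: "\<And>T. T \<ge> 0 \<Longrightarrow> P0 T > 0"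
    and P0_0: "P0 0 = 1"
    and finite0: "\<bar>long_tail_pareto_rate lam P0 0\<bar> \<noteq> \<infinity>"
  shows "\<forall>t\<ge>0. \<bar>long_tail_pareto_rate lam P0 t\<bar> \<noteq> \<infinity> \<and>
           long_tail_pareto_rate lam P0 t
             = ereal (P0 t powr (1/lam)) * long_tail_pareto_rate lam P0 0"
proof (intro allI impI)
  fix t :: real assume "t \<ge> 0"
  have "Bfun (tail_pareto_rate lam P0 0) at_top"
    using lam_pos finite0 by (rule Bfun_tail_pareto_rate_from_zero)
  then have "long_tail_pareto_rate lam P0 t
      = Limsup at_top (\<lambda>T. ereal (P0 t powr (1/lam)) * ereal (tail_pareto_rate lam P0 0 T))"
    unfolding long_tail_pareto_rate_def times_ereal.simps
    by (intro Limsup_eq_if_tendsto_diff_zero tendsto_tail_pareto_rate_rebase_diff P0_pos P0_0 \<open>t \<ge> 0\<close>) simp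
  also have "\<dots> = ereal (P0 t powr (1/lam)) * long_tail_pareto_rate lam P0 0"
    unfolding long_tail_pareto_rate_def by (intro Limsup_ereal_mult_left) auto
  finally show "\<bar>long_tail_pareto_rate lam P0 t\<bar> \<noteq> \<infinity> \<and>
      long_tail_pareto_rate lam P0 t = ereal (P0 t powr (1/lam)) * long_tail_pareto_rate lam P0 0"
    using finite0 by (cases "long_tail_pareto_rate lam P0 0") auto
qed

end
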